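(* Let $n,t,k$ be positive integers with $2\leq k\leq n-2$, $1\leq t\leq\frac{n-k-4}{2}$ and $n\equiv k\pmod 2$. Then for every integer $s$ with $t+1\leq s\leq\frac{n-k-2}{2}$ and every $\alpha\in[0,\frac12]$, $$\rho_{\alpha}\big(K_{s}\vee(K_{n+1-2s-k}\cup\overline{K_{s+k-1}})\big)<\max\Big\{\rho_{\alpha}\big(K_{t}\vee(K_{n+1-2t-k}\cup\overline{K_{t+k-1}})\big),\ \rho_{\alpha}\big(K_{\frac{n-k}{2}}\vee\overline{K_{\frac{n+k}{2}}}\big)\Big\}.$$
   Context: For a graph $G$ with adjacency matrix $A(G)$ and diagonal degree matrix $D(G)$, and $\alpha\in[0,1]$, $A_{\alpha}(G)=\alpha D(G)+(1-\alpha)A(G)$ and $\rho_{\alpha}(G)$ is the largest eigenvalue of $A_{\alpha}(G)$. $K_m$ is the complete graph on $m$ vertices, $\overline{K_m}$ the edgeless graph on $m$ vertices, $\cup$ denotes disjoint union and $G_1\vee G_2$ the join (disjoint union plus all edges between $V(G_1)$ and $V(G_2)$). *)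

theory Defs
  imports "Jordan_Normal_Form.Char_Poly"
begin

text \<open>A finite simple graph with vertex set {0..<N}, given as the pair (N, adjacency).
  Adjacency outside the vertex range is irrelevant.\<close>
type_synonym graph = "nat \<times> (nat \<Rightarrow> nat \<Rightarrow> bool)"

definition gorder :: "graph \<Rightarrow> nat" where "gorder G = fst G"
definition gadj :: "graph \<Rightarrow> nat \<Rightarrow> nat \<Rightarrow> bool" where "gadj G = snd G"

definition complete_graph :: "nat \<Rightarrow> graph" where
  "complete_graph m = (m, \<lambda>i j. i \<noteq> j)"

definition empty_graph :: "nat \<Rightarrow> graph" where
  "empty_graph m = (m, \<lambda>i j. False)"

text \<open>Disjoint union: vertices of G first, then vertices of H shifted by |V(G)|.\<close>
definition gunion :: "graph \<Rightarrow> graph \<Rightarrow> graph" where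
  "gunion G H = (gorder G + gorder H,
     \<lambda>i j. if i < gorder G \<and> j < gorder G then gadj G i j
           else if gorder G \<le> i \<and> gorder G \<le> j then gadj H (i - gorder G) (j - gorder G)
           else False)"

definition gjoin :: "graph \<Rightarrow> graph \<Rightarrow> graph" where
  "gjoin G H = (gorder G + gorder H,
     \<lambda>i j. if i < gorder G \<and> j < gorder G then gadj G i j
           else if gorder G \<le> i \<and> gorder G \<le> j then gadj H (i - gorder G) (j - gorder G)
           else True)"

definition degree :: "graph \<Rightarrow> nat \<Rightarrow> nat" where
  "degree G i = card {j. j < gorder G \<and> gadj G i j}"

definition adj_matrix :: "graph \<Rightarrow> real mat" where
  "adj_matrix G = mat (gorder G) (gorder G) (\<lambda>(i,j). if gadj G i j then 1 else 0)"

definition deg_matrix :: "graph \<Rightarrow> real mat" where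
  "deg_matrix G = mat (gorder G) (gorder G) (\<lambda>(i,j). if i = j then real (degree G i) else 0)"

definition A_alpha :: "real \<Rightarrow> graph \<Rightarrow> real mat" where
  "A_alpha \<alpha> G = \<alpha> \<cdot>\<^sub>m deg_matrix G + (1 - \<alpha>) \<cdot>\<^sub>m adj_matrix G"

definition rho_alpha :: "real \<Rightarrow> graph \<Rightarrow> real" where
  "rho_alpha \<alpha> G = Max {x. eigenvalue (A_alpha \<alpha> G) x}"

end

theory Submission
  imports Defs
begin

text \<open>
  In \<open>K\<^sub>s \<or> (K\<^sub>a \<union> \<overline>K\<^sub>b)\<close> the partition into the three parts is equitable, and a positive
  vector \<open>(1, y, z)\<close> constant on the parts is an eigenvector of \<open>A\<^sub>\<alpha>\<close> exactly for the root,
  beyond both poles, of a secular equation; by the Collatz--Wielandt bound this root is \<open>\<rho>\<^sub>\<alpha>\<close>.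
  Clearing denominators, for \<open>G(s) = K\<^sub>s \<or> (K\<^bsub>n+1-2s-k\<^esub> \<union> \<overline>K\<^bsub>s+k-1\<^esub>)\<close> and \<open>x\<close> beyond the
  poles, \<open>\<rho>\<^sub>\<alpha>(G(s)) \<le> x\<close> iff \<open>\<Phi>\<^sub>s(x) \<ge> 0\<close>, where \<open>\<Phi>\<^sub>s\<close> is the characteristic polynomial of the
  quotient matrix; and \<open>K\<^bsub>(n-k)/2\<^esub> \<or> \<overline>K\<^bsub>(n+k)/2\<^esub>\<close> is \<open>G(e)\<close> for \<open>e = (n-k)/2\<close>.
  Now \<open>\<Phi>\<^sub>s(x)\<close> is a cubic in \<open>s\<close> whose divided difference over \<open>t < s < e\<close> is explicit and,
  for \<open>\<alpha> \<le> 1/2\<close>, negative at \<open>M = max \<rho>\<^sub>\<alpha>(G(t)) \<rho>\<^sub>\<alpha>(G(e))\<close>.  As \<open>\<Phi>\<^sub>t(M) \<ge> 0\<close> and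
  \<open>\<Phi>\<^sub>e(M) \<ge> 0\<close>, this forces \<open>\<Phi>\<^sub>s(M) > 0\<close>, i.e. \<open>\<rho>\<^sub>\<alpha>(G(s)) < M\<close>.
\<close>

section \<open>Positive eigenvectors\<close>

lemma finite_eigenvalues:
  fixes A :: "'a :: field mat"
  assumes "A \<in> carrier_mat n n"
  shows "finite {x. eigenvalue A x}"
proof -
  have "char_poly A \<noteq> 0" using degree_monic_char_poly[OF assms] by auto
  then have "finite {x. poly (char_poly A) x = 0}" by (rule poly_roots_finite)
  then show ?thesis using eigenvalue_root_char_poly[OF assms] by simp
qed

lemma mult_mat_vec_index_sum:
  fixes A :: "'a :: comm_semiring_0 mat"
  assumes "A \<in> carrier_mat n n" "v \<in> carrier_vec n" "i < n"
  shows "(A *\<^sub>v v) $ i = (\<Sum>j<n. A $$ (i, j) * v $ j)"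
  using assms by (auto simp: scalar_prod_def lessThan_atLeast0 intro!: sum.cong)

text \<open>Collatz--Wielandt bound: compare an eigenvector \<open>v\<close> with \<open>w\<close> at an index where
  \<open>\<bar>v\<^sub>i\<bar> / w\<^sub>i\<close> is maximal.\<close>
lemma abs_eigenvalue_le_positive_eigenvector:
  fixes A :: "real mat"
  assumes A: "A \<in> carrier_mat n n" and nonneg: "\<And>i j. i < n \<Longrightarrow> j < n \<Longrightarrow> 0 \<le> A $$ (i, j)"
    and w: "w \<in> carrier_vec n" and w_pos: "\<And>i. i < n \<Longrightarrow> 0 < w $ i"
    and Aw: "A *\<^sub>v w = \<mu> \<cdot>\<^sub>v w" and ev: "eigenvalue A lam"
  shows "\<bar>lam\<bar> \<le> \<mu>"
proof -
  obtain v where v: "v \<in> carrier_vec n" "v \<noteq> 0\<^sub>v n" "A *\<^sub>v v = lam \<cdot>\<^sub>v v"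
    using ev A unfolding eigenvalue_def eigenvector_def by auto
  obtain j0 where j0: "j0 < n" "v $ j0 \<noteq> 0"
    using v(1,2) by (metis eq_vecI carrier_vecD index_zero_vec)
  define r where "r j = \<bar>v $ j\<bar> / w $ j" for j
  define c where "c = Max (r ` {..<n})"
  obtain i where i: "i < n" "r i = c"
    using Max_in[of "r ` {..<n}"] j0 unfolding c_def by fastforce
  have v_le: "\<bar>v $ j\<bar> \<le> c * w $ j" if "j < n" for j
  proof -
    have "r j \<le> c" unfolding c_def using that by simp
    then show ?thesis using w_pos[OF that] unfolding r_def by (simp add: pos_divide_le_eq)
  qed
  have "0 < r j0" unfolding r_def using j0 w_pos by auto
  moreover have "r j0 \<le> c" unfolding c_def using j0 by simp
  ultimately have c_w_pos: "0 < c * w $ i" using w_pos[OF i(1)] by simp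
  have v_i: "\<bar>v $ i\<bar> = c * w $ i" using i w_pos[of i] unfolding r_def by auto
  have "\<bar>lam\<bar> * (c * w $ i) = \<bar>(A *\<^sub>v v) $ i\<bar>"
    using v i by (simp add: v_i[symmetric] abs_mult)
  also have "\<dots> \<le> (\<Sum>j<n. \<bar>A $$ (i, j) * v $ j\<bar>)"
    unfolding mult_mat_vec_index_sum[OF A v(1) i(1)] by (rule sum_abs)
  also have "\<dots> \<le> (\<Sum>j<n. A $$ (i, j) * (c * w $ j))"
    using nonneg[OF i(1)] v_le by (intro sum_mono) (simp add: abs_mult mult_left_mono)
  also have "\<dots> = c * (A *\<^sub>v w) $ i"
    unfolding mult_mat_vec_index_sum[OF A w i(1)] by (simp add: sum_distrib_left algebra_simps)
  also have "\<dots> = \<mu> * (c * w $ i)" using Aw w i by simp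
  finally show ?thesis using c_w_pos by (rule mult_right_le_imp_le)
qed

lemma A_alpha_carrier: "A_alpha \<alpha> G \<in> carrier_mat (gorder G) (gorder G)"
  by (simp add: A_alpha_def deg_matrix_def adj_matrix_def)

lemma A_alpha_index:
  "i < gorder G \<Longrightarrow> j < gorder G \<Longrightarrow> A_alpha \<alpha> G $$ (i, j) =
    \<alpha> * (if i = j then real (degree G i) else 0) + (1 - \<alpha>) * (if gadj G i j then 1 else 0)"
  by (simp add: A_alpha_def deg_matrix_def adj_matrix_def)

lemma rho_alpha_eq_positive_eigenvector:
  assumes "0 \<le> \<alpha>" "\<alpha> \<le> 1" "0 < gorder G"
    and w: "w \<in> carrier_vec (gorder G)" and w_pos: "\<And>i. i < gorder G \<Longrightarrow> 0 < w $ i"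
    and Aw: "A_alpha \<alpha> G *\<^sub>v w = lam \<cdot>\<^sub>v w"
  shows "rho_alpha \<alpha> G = lam"
proof -
  have "w \<noteq> 0\<^sub>v (gorder G)" using w_pos[of 0] assms(3) by auto
  then have ev: "eigenvalue (A_alpha \<alpha> G) lam"
    unfolding eigenvalue_def eigenvector_def using w Aw A_alpha_carrier[of \<alpha> G] by auto
  have "x \<le> lam" if "eigenvalue (A_alpha \<alpha> G) x" for x
    using abs_eigenvalue_le_positive_eigenvector[OF A_alpha_carrier _ w w_pos Aw that] assms(1,2)
    by (simp add: A_alpha_index)
  then show ?thesis
    unfolding rho_alpha_def using finite_eigenvalues[OF A_alpha_carrier] ev by (intro Max_eqI) auto
qed

section \<open>The graphs \<open>K\<^sub>s \<or> (K\<^sub>a \<union> \<overline>K\<^sub>b)\<close>\<close>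

definition join_clique_union :: "nat \<Rightarrow> nat \<Rightarrow> nat \<Rightarrow> graph" where
  "join_clique_union s a b = gjoin (complete_graph s) (gunion (complete_graph a) (empty_graph b))"

lemma gorder_join_clique_union: "gorder (join_clique_union s a b) = s + a + b"
  by (simp add: join_clique_union_def gjoin_def gunion_def complete_graph_def empty_graph_def gorder_def)

lemma gadj_join_clique_union: "gadj (join_clique_union s a b) i j =
  (if i < s \<and> j < s then i \<noteq> j else if s \<le> i \<and> s \<le> j then i < s + a \<and> j < s + a \<and> i \<noteq> j else True)"
  by (auto simp: join_clique_union_def gjoin_def gunion_def complete_graph_def empty_graph_def
      gorder_def gadj_def)

lemma join_clique_union_empty: "join_clique_union s 0 b = gjoin (complete_graph s) (empty_graph b)"
  by (simp add: join_clique_union_def gunion_def complete_graph_def empty_graph_def gorder_def gadj_def)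

lemma join_clique_union_single: "join_clique_union s 1 b = join_clique_union s 0 (Suc b)"
  by (auto simp: join_clique_union_def gjoin_def gunion_def complete_graph_def empty_graph_def
      gorder_def gadj_def)

lemma sum_initial_segment_minus:
  fixes h :: "nat \<Rightarrow> 'a :: ab_group_add"
  assumes "m \<le> N"
  shows "(\<Sum>j<N. if j < m \<and> j \<noteq> i then h j else 0) = sum h {..<m} - (if i < m then h i else 0)"
proof -
  have "(\<Sum>j<N. if j < m \<and> j \<noteq> i then h j else 0) = sum h {j\<in>{..<N}. j < m \<and> j \<noteq> i}"
    by (rule sum.inter_filter[symmetric]) simp
  also have "{j\<in>{..<N}. j < m \<and> j \<noteq> i} = {..<m} - {i}" using assms by auto
  finally show ?thesis by (simp add: sum_diff1)
qed

lemma sum_neighbours_join_clique_union: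
  fixes h :: "nat \<Rightarrow> 'a :: ab_group_add"
  assumes "i < s + a + b"
  shows "(\<Sum>j<s+a+b. if gadj (join_clique_union s a b) i j then h j else 0) =
    (if i < s then sum h {..<s+a+b} - h i
     else if i < s + a then sum h {..<s+a} - h i
     else sum h {..<s})"
proof -
  define m where "m = (if i < s then s + a + b else if i < s + a then s + a else s)"
  have "(\<Sum>j<s+a+b. if gadj (join_clique_union s a b) i j then h j else 0) =
      (\<Sum>j<s+a+b. if j < m \<and> j \<noteq> i then h j else 0)"
    using assms by (intro sum.cong) (auto simp: gadj_join_clique_union m_def)
  also have "\<dots> = sum h {..<m} - (if i < m then h i else 0)"
    by (rule sum_initial_segment_minus) (simp add: m_def)
  finally show ?thesis using assms by (simp add: m_def)
qed

lemma degree_as_sum: "real (degree G i) = (\<Sum>j<gorder G. if gadj G i j then 1 else 0)"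
proof -
  have "{j. j < gorder G \<and> gadj G i j} = {j\<in>{..<gorder G}. gadj G i j}" by auto
  then have "real (degree G i) = (\<Sum>j\<in>{j\<in>{..<gorder G}. gadj G i j}. 1)"
    unfolding degree_def by simp
  also have "\<dots> = (\<Sum>j<gorder G. if gadj G i j then 1 else 0)"
    by (rule sum.inter_filter) simp
  finally show ?thesis .
qed

lemma A_alpha_mult_vec_index:
  assumes "w \<in> carrier_vec (gorder G)" "i < gorder G"
  shows "(A_alpha \<alpha> G *\<^sub>v w) $ i =
    \<alpha> * real (degree G i) * w $ i + (1 - \<alpha>) * (\<Sum>j<gorder G. if gadj G i j then w $ j else 0)"
proof -
  have "(A_alpha \<alpha> G *\<^sub>v w) $ i = (\<Sum>j<gorder G. A_alpha \<alpha> G $$ (i, j) * w $ j)"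
    using mult_mat_vec_index_sum[OF A_alpha_carrier assms] .
  also have "\<dots> = (\<Sum>j<gorder G. \<alpha> * (if i = j then real (degree G i) * w $ j else 0)
      + (1 - \<alpha>) * (if gadj G i j then w $ j else 0))"
    using assms by (intro sum.cong) (auto simp: A_alpha_index algebra_simps)
  finally show ?thesis using assms by (simp add: sum.distrib sum_distrib_left[symmetric])
qed

definition block_vec :: "nat \<Rightarrow> nat \<Rightarrow> nat \<Rightarrow> real \<Rightarrow> real \<Rightarrow> real \<Rightarrow> real vec" where
  "block_vec s a b x y z = vec (s + a + b) (\<lambda>j. if j < s then x else if j < s + a then y else z)"

lemma smult_block_vec: "c \<cdot>\<^sub>v block_vec s a b x y z = block_vec s a b (c * x) (c * y) (c * z)"
  by (auto simp: block_vec_def)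

lemma A_alpha_mult_block_vec:
  "A_alpha \<alpha> (join_clique_union s a b) *\<^sub>v block_vec s a b x y z = block_vec s a b
     (\<alpha> * (real (s + a + b) - 1) * x + (1 - \<alpha>) * (real s * x + real a * y + real b * z - x))
     (\<alpha> * (real s + real a - 1) * y + (1 - \<alpha>) * (real s * x + real a * y - y))
     (\<alpha> * real s * z + (1 - \<alpha>) * (real s * x))"
  (is "?A *\<^sub>v ?w = ?rhs")
proof (rule eq_vecI)
  let ?G = "join_clique_union s a b"
  let ?f = "\<lambda>j. if j < s then x else if j < s + a then y else z"
  have sum_s: "sum ?f {..<s} = real s * x" by simp
  have sum_a: "sum ?f {s..<s+a} = real a * y" and sum_b: "sum ?f {s+a..<s+a+b} = real b * z" by simp_all
  have concat: "sum ?f {..<l} + sum ?f {l..<m} = sum ?f {..<m}" if "l \<le> m" for l m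
    using sum.atLeastLessThan_concat[of 0 l m ?f] that by (simp add: lessThan_atLeast0)
  have sums: "sum ?f {..<s} = real s * x" "sum ?f {..<s+a} = real s * x + real a * y"
    "sum ?f {..<s+a+b} = real s * x + real a * y + real b * z"
    using sum_s sum_a sum_b concat[of s "s+a"] concat[of "s+a" "s+a+b"] by simp_all
  show "dim_vec (?A *\<^sub>v ?w) = dim_vec ?rhs"
    using A_alpha_carrier[of \<alpha> ?G] by (simp add: block_vec_def gorder_join_clique_union)
  fix i assume "i < dim_vec ?rhs"
  then have i: "i < gorder ?G" by (simp add: block_vec_def gorder_join_clique_union)
  have w: "?w \<in> carrier_vec (gorder ?G)" by (simp add: block_vec_def gorder_join_clique_union)
  have "(\<Sum>j<gorder ?G. if gadj ?G i j then ?w $ j else 0) = (\<Sum>j<s+a+b. if gadj ?G i j then ?f j else 0)"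
    by (intro sum.cong) (auto simp: block_vec_def gorder_join_clique_union)
  moreover have "real (degree ?G i) = (\<Sum>j<s+a+b. if gadj ?G i j then 1 else 0)"
    by (simp add: degree_as_sum gorder_join_clique_union)
  ultimately have "(?A *\<^sub>v ?w) $ i = \<alpha> * (\<Sum>j<s+a+b. if gadj ?G i j then 1 else 0) * ?f i
      + (1 - \<alpha>) * (\<Sum>j<s+a+b. if gadj ?G i j then ?f j else 0)"
    using A_alpha_mult_vec_index[OF w i] i by (simp add: block_vec_def gorder_join_clique_union)
  then show "(?A *\<^sub>v ?w) $ i = ?rhs $ i"
    using i sums sum_neighbours_join_clique_union[of i s a b ?f]
      sum_neighbours_join_clique_union[of i s a b "\<lambda>_. 1 :: real"]
    by (simp add: block_vec_def gorder_join_clique_union split: if_splits)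
qed

section \<open>The secular equation\<close>

text \<open>Eliminating \<open>y\<close> and \<open>z\<close> from the block form of \<open>A\<^sub>\<alpha> (1, y, z) = x (1, y, z)\<close>
  leaves the equation \<open>secular \<alpha> s a b x = 0\<close>.\<close>
definition secular :: "real \<Rightarrow> real \<Rightarrow> real \<Rightarrow> real \<Rightarrow> real \<Rightarrow> real" where
  "secular \<alpha> s a b x = x - (\<alpha> * (s + a + b - 1) + (1 - \<alpha>) * (s - 1))
     - (1 - \<alpha>)\<^sup>2 * a * s / (x - (a - 1 + \<alpha> * s)) - (1 - \<alpha>)\<^sup>2 * b * s / (x - \<alpha> * s)"

lemma secular_mult_denominators:
  assumes "x \<noteq> a - 1 + \<alpha> * s" "x \<noteq> \<alpha> * s"
  shows "(x - (a - 1 + \<alpha> * s)) * (x - \<alpha> * s) * secular \<alpha> s a b x =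
    (x - (\<alpha> * (s + a + b - 1) + (1 - \<alpha>) * (s - 1))) * (x - (a - 1 + \<alpha> * s)) * (x - \<alpha> * s)
    - (1 - \<alpha>)\<^sup>2 * a * s * (x - \<alpha> * s) - (1 - \<alpha>)\<^sup>2 * b * s * (x - (a - 1 + \<alpha> * s))"
proof -
  have "(x - p) * (x - q) * (x - d - A / (x - p) - B / (x - q)) =
      (x - d) * (x - p) * (x - q) - A * (x - q) - B * (x - p)" if "x \<noteq> p" "x \<noteq> q" for p q d A B :: real
  proof -
    have "(x - p) * (x - q) * (A / (x - p)) = A * (x - q)" "(x - p) * (x - q) * (B / (x - q)) = B * (x - p)"
      using that by simp_all
    then show ?thesis by (simp add: right_diff_distrib mult.commute mult.left_commute)
  qed
  then show ?thesis unfolding secular_def using assms by blast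
qed

lemma secular_strict_mono_on:
  assumes "0 \<le> a" "0 \<le> b" "0 \<le> s"
  shows "strict_mono_on {x. a - 1 + \<alpha> * s < x \<and> \<alpha> * s < x} (secular \<alpha> s a b)"
proof (rule strict_mono_onI)
  fix u v assume "u \<in> {x. a - 1 + \<alpha> * s < x \<and> \<alpha> * s < x}" "u < v"
  then have "(1 - \<alpha>)\<^sup>2 * a * s / (v - (a - 1 + \<alpha> * s)) \<le> (1 - \<alpha>)\<^sup>2 * a * s / (u - (a - 1 + \<alpha> * s))"
    and "(1 - \<alpha>)\<^sup>2 * b * s / (v - \<alpha> * s) \<le> (1 - \<alpha>)\<^sup>2 * b * s / (u - \<alpha> * s)"
    using assms by (auto intro!: divide_left_mono)
  then show "secular \<alpha> s a b u < secular \<alpha> s a b v" unfolding secular_def using \<open>u < v\<close> by linarith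
qed

lemma one_le_secular_at_order:
  assumes "0 < s" "0 \<le> a" "0 \<le> b" "0 \<le> \<alpha>" "\<alpha> < 1"
  shows "1 \<le> secular \<alpha> s a b (s + a + b)"
proof -
  have s_gap: "(1 - \<alpha>) * s \<le> s + a + b - (a - 1 + \<alpha> * s)" "(1 - \<alpha>) * s \<le> s + a + b - \<alpha> * s"
    and pos: "0 < (1 - \<alpha>) * s" using assms by (auto simp: algebra_simps)
  then have gap_pos: "0 < s + a + b - (a - 1 + \<alpha> * s)" "0 < s + a + b - \<alpha> * s" by linarith+
  have "(1 - \<alpha>)\<^sup>2 * a * s / (s + a + b - (a - 1 + \<alpha> * s)) \<le> (1 - \<alpha>)\<^sup>2 * a * s / ((1 - \<alpha>) * s)"
    by (rule divide_left_mono[OF s_gap(1) _ mult_pos_pos[OF gap_pos(1) pos]]) (use assms in simp)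
  moreover have "(1 - \<alpha>)\<^sup>2 * b * s / (s + a + b - \<alpha> * s) \<le> (1 - \<alpha>)\<^sup>2 * b * s / ((1 - \<alpha>) * s)"
    by (rule divide_left_mono[OF s_gap(2) _ mult_pos_pos[OF gap_pos(2) pos]]) (use assms in simp)
  moreover have cancel: "(1 - \<alpha>)\<^sup>2 * c * s / ((1 - \<alpha>) * s) = (1 - \<alpha>) * c" for c :: real
    using assms by (auto simp: power2_eq_square)
  note cancel[of a] cancel[of b]
  moreover have "s + a + b - (\<alpha> * (s + a + b - 1) + (1 - \<alpha>) * (s - 1)) = 1 + (1 - \<alpha>) * a + (1 - \<alpha>) * b"
    by (simp add: algebra_simps)
  ultimately show ?thesis unfolding secular_def by linarith
qed

lemma secular_single: "secular \<alpha> s 1 b x = secular \<alpha> s 0 (b + 1) x"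
  unfolding secular_def by (simp add: add_divide_distrib[symmetric] algebra_simps)

lemma secular_root_exists:
  fixes a b :: nat
  assumes "0 < s" "a \<noteq> 1" "0 < a + b" "0 \<le> \<alpha>" "\<alpha> < 1"
  obtains lam where "\<alpha> * s < lam" "real a - 1 + \<alpha> * s < lam" "secular \<alpha> s a b lam = 0"
proof -
  define p where "p = real a - 1 + \<alpha> * s"
  define q where "q = \<alpha> * s"
  define r where "r = max p q"
  define h where "h x = (x - (\<alpha> * (s + a + b - 1) + (1 - \<alpha>) * (s - 1))) * (x - p) * (x - q)
    - (1 - \<alpha>)\<^sup>2 * a * s * (x - q) - (1 - \<alpha>)\<^sup>2 * b * s * (x - p)" for x
  have h_secular: "h x = (x - p) * (x - q) * secular \<alpha> s a b x" if "r < x" for x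
    using secular_mult_denominators[of x a \<alpha> s b] that unfolding h_def p_def q_def r_def by simp
  have "h r < 0"
  proof (cases "a = 0")
    case True
    then have "r = q" "p < q" "0 < b" using assms unfolding r_def p_def q_def by auto
    then show ?thesis unfolding h_def using assms by (simp add: mult_pos_pos)
  next
    case False
    then have "r = p" "q < p" "0 < a" using assms unfolding r_def p_def q_def by auto
    then show ?thesis unfolding h_def using assms by (simp add: mult_pos_pos)
  qed
  define N where "N = s + a + b"
  have "\<alpha> * s < s" using assms by simp
  moreover have "0 \<le> real a" "0 \<le> real b" by simp_all
  ultimately have "p < N" "q < N" unfolding p_def q_def N_def using assms(1) by linarith+
  then have r_N: "r < N" unfolding r_def by simp
  then have "0 < h N"
    using one_le_secular_at_order[of s a b \<alpha>] assms h_secular[OF r_N] unfolding N_def r_def by simp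
  moreover have "continuous_on {r..N} h" unfolding h_def by (intro continuous_intros)
  ultimately obtain x where x: "r \<le> x" "h x = 0"
    using IVT'[of h r 0 N] \<open>h r < 0\<close> r_N by auto
  then have "r < x" using \<open>h r < 0\<close> by (cases "x = r") auto
  then have "secular \<alpha> s a b x = 0" using h_secular x unfolding r_def by simp
  then show ?thesis using that \<open>r < x\<close> unfolding r_def p_def q_def by auto
qed

lemma rho_alpha_join_clique_union_eq_root:
  assumes "0 < s" "0 \<le> \<alpha>" "\<alpha> < 1" "\<alpha> * s < lam" "real a - 1 + \<alpha> * s < lam"
    and root: "secular \<alpha> s a b lam = 0"
  shows "rho_alpha \<alpha> (join_clique_union s a b) = lam"
proof (rule rho_alpha_eq_positive_eigenvector)
  define y where "y = (1 - \<alpha>) * s / (lam - (real a - 1 + \<alpha> * s))"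
  define z where "z = (1 - \<alpha>) * s / (lam - \<alpha> * s)"
  have "y * (lam - (real a - 1 + \<alpha> * s)) = (1 - \<alpha>) * s" "z * (lam - \<alpha> * s) = (1 - \<alpha>) * s"
    using assms unfolding y_def z_def by simp_all
  then have y_eq: "\<alpha> * (real s + real a - 1) * y + (1 - \<alpha>) * (real s + real a * y - y) = lam * y"
    and z_eq: "\<alpha> * real s * z + (1 - \<alpha>) * real s = lam * z"
    by (simp_all add: algebra_simps)
  have "(1 - \<alpha>)\<^sup>2 * real a * s / (lam - (real a - 1 + \<alpha> * s)) = (1 - \<alpha>) * (real a * y)"
    and "(1 - \<alpha>)\<^sup>2 * real b * s / (lam - \<alpha> * s) = (1 - \<alpha>) * (real b * z)"
    unfolding y_def z_def by (simp_all add: power2_eq_square)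
  then have x_eq: "\<alpha> * (real (s + a + b) - 1) + (1 - \<alpha>) * (real s + real a * y + real b * z - 1) = lam"
    using root unfolding secular_def by (simp add: algebra_simps)
  show "A_alpha \<alpha> (join_clique_union s a b) *\<^sub>v block_vec s a b 1 y z = lam \<cdot>\<^sub>v block_vec s a b 1 y z"
    unfolding A_alpha_mult_block_vec smult_block_vec using x_eq y_eq z_eq by simp
  have "0 < y" "0 < z" using assms unfolding y_def z_def by simp_all
  then show "\<And>i. i < gorder (join_clique_union s a b) \<Longrightarrow> 0 < block_vec s a b 1 y z $ i"
    by (simp add: block_vec_def gorder_join_clique_union)
qed (use assms in \<open>auto simp: block_vec_def gorder_join_clique_union\<close>)

lemma rho_alpha_join_clique_union_root:
  assumes "0 < s" "0 < a + b" "0 \<le> \<alpha>" "\<alpha> < 1"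
  defines "\<rho> \<equiv> rho_alpha \<alpha> (join_clique_union s a b)"
  shows "\<alpha> * s < \<rho>" "real a - 1 + \<alpha> * s < \<rho>" "secular \<alpha> s a b \<rho> = 0"
proof -
  have root: "\<alpha> * s < rho_alpha \<alpha> (join_clique_union s a' b') \<and>
      real a' - 1 + \<alpha> * s < rho_alpha \<alpha> (join_clique_union s a' b') \<and>
      secular \<alpha> s a' b' (rho_alpha \<alpha> (join_clique_union s a' b')) = 0"
    if a': "a' \<noteq> 1" "0 < a' + b'" for a' b'
  proof -
    obtain lam where "\<alpha> * s < lam" "real a' - 1 + \<alpha> * s < lam" "secular \<alpha> s a' b' lam = 0"
      using secular_root_exists[of s a' b' \<alpha>] a' assms by auto
    then show ?thesis using rho_alpha_join_clique_union_eq_root[of s \<alpha> lam a' b'] assms by simp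
  qed
  have "\<alpha> * s < \<rho> \<and> real a - 1 + \<alpha> * s < \<rho> \<and> secular \<alpha> s a b \<rho> = 0"
  proof (cases "a = 1")
    case True
    then show ?thesis
      using root[of 0 "Suc b"] unfolding \<rho>_def True join_clique_union_single
      by (simp add: secular_single add.commute)
  qed (use root assms in \<open>simp add: \<rho>_def\<close>)
  then show "\<alpha> * s < \<rho>" "real a - 1 + \<alpha> * s < \<rho>" "secular \<alpha> s a b \<rho> = 0" by simp_all
qed

section \<open>The family \<open>G(s)\<close>\<close>

text \<open>The characteristic polynomial of the quotient matrix of \<open>G(s) =
  K\<^sub>s \<or> (K\<^bsub>n+1-2s-k\<^esub> \<union> \<overline>K\<^bsub>s+k-1\<^esub>)\<close>, a cubic in \<open>s\<close> as well as in \<open>x\<close>.\<close>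
definition quotient_cubic :: "real \<Rightarrow> real \<Rightarrow> real \<Rightarrow> real \<Rightarrow> real \<Rightarrow> real" where
  "quotient_cubic \<alpha> n k s x =
     (x - (\<alpha> * (n - 1) + (1 - \<alpha>) * (s - 1))) * (x - (n - 2 * s - k + \<alpha> * s)) * (x - \<alpha> * s)
     - (1 - \<alpha>)\<^sup>2 * (n + 1 - 2 * s - k) * s * (x - \<alpha> * s)
     - (1 - \<alpha>)\<^sup>2 * (s + k - 1) * s * (x - (n - 2 * s - k + \<alpha> * s))"

lemma quotient_cubic_eq_secular:
  assumes "x \<noteq> n - 2 * s - k + \<alpha> * s" "x \<noteq> \<alpha> * s"
  shows "quotient_cubic \<alpha> n k s x =
    (x - (n - 2 * s - k + \<alpha> * s)) * (x - \<alpha> * s) * secular \<alpha> s (n + 1 - 2 * s - k) (s + k - 1) x"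
proof -
  have p: "n + 1 - 2 * s - k - 1 + \<alpha> * s = n - 2 * s - k + \<alpha> * s"
    and d: "s + (n + 1 - 2 * s - k) + (s + k - 1) - 1 = n - 1" by simp_all
  show ?thesis
    using secular_mult_denominators[of x "n + 1 - 2 * s - k" \<alpha> s "s + k - 1", unfolded p d, OF assms]
    unfolding quotient_cubic_def by (rule sym)
qed

lemma quotient_cubic_three_point:
  "(e - t) * quotient_cubic \<alpha> n k s x - (e - s) * quotient_cubic \<alpha> n k t x - (s - t) * quotient_cubic \<alpha> n k e x =
   (e - t) * (s - t) * (s - e) * (- (1 - \<alpha>) * (2 - 3 * \<alpha>) * (s + t + e)
     + (- x + n * (2 * \<alpha>\<^sup>2 - 2 * \<alpha> + 1) - k * (1 - \<alpha>) * (3 - 4 * \<alpha>) + 3 * \<alpha>\<^sup>2 - 6 * \<alpha> + 2))"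
  unfolding quotient_cubic_def by (simp add: algebra_simps power2_eq_square)

lemma quotient_cubic_three_point_coeff_neg:
  fixes \<alpha> n k t s e x :: real
  assumes "0 \<le> \<alpha>" "\<alpha> \<le> 1/2" "0 \<le> t" "0 \<le> k" "t + 1 \<le> s" "t + 2 \<le> e" "n = k + 2 * e"
    and "n - 2 * t - k + \<alpha> * t < x"
  shows "- (1 - \<alpha>) * (2 - 3 * \<alpha>) * (s + t + e)
     + (- x + n * (2 * \<alpha>\<^sup>2 - 2 * \<alpha> + 1) - k * (1 - \<alpha>) * (3 - 4 * \<alpha>) + 3 * \<alpha>\<^sup>2 - 6 * \<alpha> + 2) < 0"
proof -
  have "- (1 - \<alpha>) * (2 - 3 * \<alpha>) * (s + t + e)
     + (- x + n * (2 * \<alpha>\<^sup>2 - 2 * \<alpha> + 1) - k * (1 - \<alpha>) * (3 - 4 * \<alpha>) + 3 * \<alpha>\<^sup>2 - 6 * \<alpha> + 2) =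
    - ((1 - \<alpha>) * (2 - 3 * \<alpha>) * (s - t - 1)) - ((1 - \<alpha>) * (2 + \<alpha>) * (e - t - 2))
    - (x - (n - 2 * t - k + \<alpha> * t)) - k * ((1 - 2 * \<alpha>) * (2 - \<alpha>)) - t * (5 * (1 - \<alpha>)\<^sup>2 - 1)
    - (4 - \<alpha> - 2 * \<alpha>\<^sup>2)"
    unfolding assms(7) by (simp add: algebra_simps power2_eq_square)
  moreover have "0 \<le> (1 - \<alpha>) * (2 - 3 * \<alpha>) * (s - t - 1)" "0 \<le> (1 - \<alpha>) * (2 + \<alpha>) * (e - t - 2)"
    "0 \<le> k * ((1 - 2 * \<alpha>) * (2 - \<alpha>))" using assms by simp_all
  moreover have "0 \<le> t * (5 * (1 - \<alpha>)\<^sup>2 - 1)"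
  proof -
    have "(1/2)\<^sup>2 \<le> (1 - \<alpha>)\<^sup>2" using assms by (intro power_mono) auto
    then have "0 \<le> 5 * (1 - \<alpha>)\<^sup>2 - 1" by (simp add: power2_eq_square)
    then show ?thesis using assms(3) by simp
  qed
  moreover have "\<alpha>\<^sup>2 \<le> (1/2)\<^sup>2" using assms by (intro power_mono) auto
  then have "0 < 4 - \<alpha> - 2 * \<alpha>\<^sup>2" using assms(2) by (simp add: power_divide)
  ultimately show ?thesis using assms(8) by linarith
qed

lemma quotient_cubic_pos_between:
  fixes \<alpha> n k t s e x :: real
  assumes "0 \<le> \<alpha>" "\<alpha> \<le> 1/2" "0 \<le> t" "0 \<le> k" "t + 1 \<le> s" "s < e" "t + 2 \<le> e" "n = k + 2 * e"
    and "n - 2 * t - k + \<alpha> * t < x"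
    and "0 \<le> quotient_cubic \<alpha> n k t x" "0 \<le> quotient_cubic \<alpha> n k e x"
  shows "0 < quotient_cubic \<alpha> n k s x"
proof -
  define C where "C = - (1 - \<alpha>) * (2 - 3 * \<alpha>) * (s + t + e)
     + (- x + n * (2 * \<alpha>\<^sup>2 - 2 * \<alpha> + 1) - k * (1 - \<alpha>) * (3 - 4 * \<alpha>) + 3 * \<alpha>\<^sup>2 - 6 * \<alpha> + 2)"
  have "C < 0" using quotient_cubic_three_point_coeff_neg[of \<alpha> t k s e n x] assms unfolding C_def by simp
  moreover have "0 < (e - t) * (s - t) * (e - s)" using assms by simp
  ultimately have "0 < ((e - t) * (s - t) * (e - s)) * (- C)" by (simp add: mult_pos_neg)
  also have "\<dots> = (e - t) * (s - t) * (s - e) * C" by (simp add: algebra_simps)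
  also have "\<dots> = (e - t) * quotient_cubic \<alpha> n k s x - (e - s) * quotient_cubic \<alpha> n k t x
      - (s - t) * quotient_cubic \<alpha> n k e x"
    unfolding C_def by (rule quotient_cubic_three_point[symmetric])
  finally have "0 < (e - t) * quotient_cubic \<alpha> n k s x"
    using assms mult_nonneg_nonneg[of "e - s" "quotient_cubic \<alpha> n k t x"]
      mult_nonneg_nonneg[of "s - t" "quotient_cubic \<alpha> n k e x"] by linarith
  then show ?thesis using assms by (simp add: zero_less_mult_iff)
qed

lemma rho_alpha_family_quotient_cubic:
  fixes n k s :: nat
  assumes "0 < s" "1 \<le> k" "2 * s + k \<le> n" "0 \<le> \<alpha>" "\<alpha> < 1"
  defines "\<rho> \<equiv> rho_alpha \<alpha> (join_clique_union s (n + 1 - 2 * s - k) (s + k - 1))"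
  defines "p \<equiv> real n - 2 * real s - real k + \<alpha> * real s"
  shows "p < \<rho>"
    and "p < x \<Longrightarrow> \<rho> \<le> x \<longleftrightarrow> 0 \<le> quotient_cubic \<alpha> n k s x"
    and "p < x \<Longrightarrow> \<rho> < x \<longleftrightarrow> 0 < quotient_cubic \<alpha> n k s x"
proof -
  define a b where "a = n + 1 - 2 * s - k" and "b = s + k - 1"
  have ab: "real a = real n + 1 - 2 * s - k" "real b = real s + k - 1"
    unfolding a_def b_def using assms by auto
  have root: "\<alpha> * s < \<rho>" "real a - 1 + \<alpha> * s < \<rho>" "secular \<alpha> s a b \<rho> = 0"
    using rho_alpha_join_clique_union_root[of s a b \<alpha>] assms unfolding \<rho>_def a_def b_def by auto
  have q_le_p: "\<alpha> * s \<le> p" unfolding p_def using assms by simp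
  show "p < \<rho>" using root(2) ab unfolding p_def by simp
  have mono: "strict_mono_on {y. real a - 1 + \<alpha> * s < y \<and> \<alpha> * s < y} (secular \<alpha> s a b)"
    by (rule secular_strict_mono_on) simp_all
  assume "p < x"
  then have factor_pos: "0 < (x - p) * (x - \<alpha> * s)" using q_le_p by simp
  have cubic: "quotient_cubic \<alpha> n k s x = (x - p) * (x - \<alpha> * s) * secular \<alpha> s a b x"
    using quotient_cubic_eq_secular[of x n s k \<alpha>] \<open>p < x\<close> q_le_p ab unfolding p_def by simp
  have "0 \<le> quotient_cubic \<alpha> n k s x \<longleftrightarrow> secular \<alpha> s a b \<rho> \<le> secular \<alpha> s a b x"
    and "0 < quotient_cubic \<alpha> n k s x \<longleftrightarrow> secular \<alpha> s a b \<rho> < secular \<alpha> s a b x"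
    unfolding cubic root(3) using mult_le_cancel_left_pos[OF factor_pos, of 0]
      mult_less_cancel_left_pos[OF factor_pos, of 0] by simp_all
  moreover have "\<rho> \<in> {y. real a - 1 + \<alpha> * s < y \<and> \<alpha> * s < y}"
    and "x \<in> {y. real a - 1 + \<alpha> * s < y \<and> \<alpha> * s < y}"
    using root \<open>p < x\<close> q_le_p ab unfolding p_def by auto
  ultimately show "\<rho> \<le> x \<longleftrightarrow> 0 \<le> quotient_cubic \<alpha> n k s x" "\<rho> < x \<longleftrightarrow> 0 < quotient_cubic \<alpha> n k s x"
    using strict_mono_on_less_eq[OF mono] strict_mono_on_less[OF mono] by simp_all
qed

theorem lemma3p2:
  fixes n t k s :: nat and \<alpha> :: real
  assumes "2 \<le> k" "k + 2 \<le> n"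
    and "1 \<le> t" "2 * real t \<le> real n - real k - 4"
    and "n mod 2 = k mod 2"
    and "t + 1 \<le> s" "2 * real s \<le> real n - real k - 2"
    and "0 \<le> \<alpha>" "\<alpha> \<le> 1/2"
  shows "rho_alpha \<alpha> (gjoin (complete_graph s)
            (gunion (complete_graph (n + 1 - 2*s - k)) (empty_graph (s + k - 1))))
         < max (rho_alpha \<alpha> (gjoin (complete_graph t)
                   (gunion (complete_graph (n + 1 - 2*t - k)) (empty_graph (t + k - 1)))))
               (rho_alpha \<alpha> (gjoin (complete_graph ((n - k) div 2))
                   (empty_graph ((n + k) div 2))))"
proof -
  define e where "e = (n - k) div 2"
  have n_eq: "n = k + 2 * e" using assms(2,5) unfolding e_def by presburger
  have half: "(n + k) div 2 = Suc (e + k - 1)" and single: "n + 1 - 2 * e - k = 1"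
    using assms(1) n_eq by simp_all
  have e_graph: "gjoin (complete_graph ((n - k) div 2)) (empty_graph ((n + k) div 2)) =
      join_clique_union e (n + 1 - 2 * e - k) (e + k - 1)"
    unfolding e_def[symmetric] half single join_clique_union_single join_clique_union_empty ..
  let ?\<rho> = "\<lambda>s. rho_alpha \<alpha> (join_clique_union s (n + 1 - 2 * s - k) (s + k - 1))"
  define M where "M = max (?\<rho> t) (?\<rho> e)"
  have bounds: "0 < t" "0 < s" "0 < e" "1 \<le> k" "t + 2 \<le> e" "s < e" "2 * t + k \<le> n" "2 * s + k \<le> n"
    "2 * e + k \<le> n" "\<alpha> < 1" using assms(1,3,4,6,7,9) n_eq by linarith+
  note family_t = rho_alpha_family_quotient_cubic[OF bounds(1,4,7) assms(8) bounds(10)]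
    and family_s = rho_alpha_family_quotient_cubic[OF bounds(2,4,8) assms(8) bounds(10)]
    and family_e = rho_alpha_family_quotient_cubic[OF bounds(3,4,9) assms(8) bounds(10)]
  have M_ge: "?\<rho> t \<le> M" "?\<rho> e \<le> M" unfolding M_def by simp_all
  then have pole_t: "real n - 2 * real t - real k + \<alpha> * real t < M"
    and pole_e: "real n - 2 * real e - real k + \<alpha> * real e < M"
    using family_t(1) family_e(1) by linarith+
  have "0 < quotient_cubic \<alpha> n k s M"
    by (rule quotient_cubic_pos_between[of \<alpha> t k s e n M])
      (use assms(6,8,9) bounds n_eq pole_t family_t(2)[OF pole_t] family_e(2)[OF pole_e] M_ge in simp_all)
  moreover have "real n - 2 * real s - real k + \<alpha> * real s < M"
    using pole_t assms(6,9) mult_right_mono[of \<alpha> 2 "real s - real t"] by (simp add: algebra_simps)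
  ultimately have "?\<rho> s < M" using family_s(3) by simp
  then show ?thesis unfolding e_graph M_def join_clique_union_def .
qed

end
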